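(* Let $\mathbb{G}$ be a subclass of anterial graphs on $V$ that contains all DAGs on $V$, and let $\mathcal{M}$ be Pearl-minimality relative to $\mathbb{G}$. For a distribution $P$ on $V$, $U_{\mathcal{M}}(P)=\top$ if and only if $P$ is graphical, i.e. there exists $G\in\mathbb{G}$ such that $P$ is faithful to $G$.
   Context: Anterial graphs are graphs with directed, undirected and bidirected edges such that there is no path from $i_0$ to $i_n$ with $i_0\leftrightarrow i_n$ whose edges are all undirected or directed forward ($i_m\to i_{m+1}$), and no cycle whose edges are all undirected or directed forward; they carry a standard separation criterion (d-separation for DAGs). $J(G)$ is the set of separation triples of $G$, $J(P)$ the set of conditional independence triples of $P$; graphs are Markov equivalent if their $J$'s coincide. $P$ is faithful to $G$ if $J(G)=J(P)$. $\mathcal{M}(P,G)=\top$ ($P$ Pearl-minimal to $G\in\mathbb{G}$) iff there is no $G'\in\mathbb{G}$ with $J(G)\subsetneq J(G')\subseteq J(P)$. $U_{\mathcal{M}}(P)=\top$ means all $G\in\mathbb{G}$ with $\mathcal{M}(P,G)=\top$ are pairwise Markov equivalent. *)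

theory Defs
  imports "HOL-Probability.Probability"
begin

text \<open>A mixed graph has directed edges (pairs (i,j) meaning i \<rightarrow> j),
undirected edges (lines, symmetric) and bidirected edges (arcs, symmetric).\<close>

record 'v mgraph =
  dir :: "('v \<times> 'v) set"
  und :: "('v \<times> 'v) set"
  bid :: "('v \<times> 'v) set"

definition mixed_graph :: "'v set \<Rightarrow> 'v mgraph \<Rightarrow> bool" where
  "mixed_graph V G \<longleftrightarrow>
     dir G \<subseteq> V \<times> V \<and> und G \<subseteq> V \<times> V \<and> bid G \<subseteq> V \<times> V \<and>
     (\<forall>i. (i,i) \<notin> dir G \<and> (i,i) \<notin> und G \<and> (i,i) \<notin> bid G) \<and>
     sym (und G) \<and> sym (bid G)"

datatype etype = Fwd | Bwd | Lin | Arc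

fun step :: "'v mgraph \<Rightarrow> etype \<Rightarrow> 'v \<Rightarrow> 'v \<Rightarrow> bool" where
  "step G Fwd i j = ((i,j) \<in> dir G)"
| "step G Bwd i j = ((j,i) \<in> dir G)"
| "step G Lin i j = ((i,j) \<in> und G)"
| "step G Arc i j = ((i,j) \<in> bid G)"

definition walk :: "'v mgraph \<Rightarrow> 'v list \<Rightarrow> etype list \<Rightarrow> bool" where
  "walk G vs es \<longleftrightarrow> length vs = Suc (length es) \<and>
     (\<forall>k < length es. step G (es ! k) (vs ! k) (vs ! Suc k))"

definition anterial_path :: "'v mgraph \<Rightarrow> 'v list \<Rightarrow> etype list \<Rightarrow> bool" where
  "anterial_path G vs es \<longleftrightarrow> walk G vs es \<and> es \<noteq> [] \<and> distinct vs \<and>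
     set es \<subseteq> {Lin, Fwd}"

definition semidirected_cycle :: "'v mgraph \<Rightarrow> 'v list \<Rightarrow> etype list \<Rightarrow> bool" where
  "semidirected_cycle G vs es \<longleftrightarrow> walk G vs es \<and> es \<noteq> [] \<and> hd vs = last vs \<and>
     distinct (tl vs) \<and> set es \<subseteq> {Lin, Fwd} \<and> Fwd \<in> set es"

definition anterial :: "'v set \<Rightarrow> 'v mgraph \<Rightarrow> bool" where
  "anterial V G \<longleftrightarrow> mixed_graph V G \<and>
     (\<forall>i j. (i,j) \<in> bid G \<longrightarrow>
        \<not> (\<exists>vs es. anterial_path G vs es \<and> hd vs = i \<and> last vs = j)) \<and>
     \<not> (\<exists>vs es. semidirected_cycle G vs es)"

definition DAG :: "'v set \<Rightarrow> 'v mgraph \<Rightarrow> bool" where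
  "DAG V G \<longleftrightarrow> mixed_graph V G \<and> und G = {} \<and> bid G = {} \<and> acyclic (dir G)"

definition head_at_end :: "etype \<Rightarrow> bool" where
  "head_at_end e \<longleftrightarrow> e = Fwd \<or> e = Arc"
definition head_at_start :: "etype \<Rightarrow> bool" where
  "head_at_start e \<longleftrightarrow> e = Bwd \<or> e = Arc"

definition "section" :: "etype list \<Rightarrow> nat \<Rightarrow> nat \<Rightarrow> bool" where
  "section es p q \<longleftrightarrow> p \<le> q \<and> q \<le> length es \<and>
     (\<forall>k. p \<le> k \<and> k < q \<longrightarrow> es ! k = Lin) \<and>
     (0 < p \<longrightarrow> es ! (p - 1) \<noteq> Lin) \<and>
     (q < length es \<longrightarrow> es ! q \<noteq> Lin)"

definition collider_section :: "etype list \<Rightarrow> nat \<Rightarrow> nat \<Rightarrow> bool" where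
  "collider_section es p q \<longleftrightarrow> section es p q \<and> 0 < p \<and> q < length es \<and>
     head_at_end (es ! (p - 1)) \<and> head_at_start (es ! q)"

definition m_connecting :: "'v mgraph \<Rightarrow> 'v set \<Rightarrow> 'v list \<Rightarrow> etype list \<Rightarrow> bool" where
  "m_connecting G C vs es \<longleftrightarrow> walk G vs es \<and>
     (\<forall>p q. section es p q \<longrightarrow>
        (if collider_section es p q then (\<exists>k\<in>{p..q}. vs ! k \<in> C)
         else (\<forall>k\<in>{p..q}. vs ! k \<notin> C)))"

definition separated :: "'v mgraph \<Rightarrow> 'v set \<Rightarrow> 'v set \<Rightarrow> 'v set \<Rightarrow> bool" where
  "separated G A B C \<longleftrightarrow>
     \<not> (\<exists>vs es. m_connecting G C vs es \<and> hd vs \<in> A \<and> last vs \<in> B)"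

definition triples :: "'v set \<Rightarrow> ('v set \<times> 'v set \<times> 'v set) set" where
  "triples V = {(A,B,C). A \<subseteq> V \<and> B \<subseteq> V \<and> C \<subseteq> V \<and>
       A \<inter> B = {} \<and> A \<inter> C = {} \<and> B \<inter> C = {}}"

definition J_graph :: "'v set \<Rightarrow> 'v mgraph \<Rightarrow> ('v set \<times> 'v set \<times> 'v set) set" where
  "J_graph V G = {(A,B,C) \<in> triples V. separated G A B C}"

definition var_algebra :: "('v \<Rightarrow> 'b) measure \<Rightarrow> ('v \<Rightarrow> 'b measure) \<Rightarrow> 'v set \<Rightarrow> ('v \<Rightarrow> 'b) measure" where
  "var_algebra P M S = vimage_algebra (space P) (\<lambda>x. restrict x S) (PiM S M)"

definition cond_indep ::
  "('v \<Rightarrow> 'b) measure \<Rightarrow> ('v \<Rightarrow> 'b measure) \<Rightarrow> 'v set \<Rightarrow> 'v set \<Rightarrow> 'v set \<Rightarrow> bool" where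
  "cond_indep P M A B C \<longleftrightarrow>
     (\<forall>EA \<in> sets (var_algebra P M A). \<forall>EB \<in> sets (var_algebra P M B).
        AE x in P. real_cond_exp P (var_algebra P M C) (indicator (EA \<inter> EB)) x =
                   real_cond_exp P (var_algebra P M C) (indicator EA) x *
                   real_cond_exp P (var_algebra P M C) (indicator EB) x)"

definition distribution_on :: "'v set \<Rightarrow> ('v \<Rightarrow> 'b measure) \<Rightarrow> ('v \<Rightarrow> 'b) measure \<Rightarrow> bool" where
  "distribution_on V M P \<longleftrightarrow> prob_space P \<and> sets P = sets (PiM V M)"

definition J_dist :: "'v set \<Rightarrow> ('v \<Rightarrow> 'b measure) \<Rightarrow> ('v \<Rightarrow> 'b) measure \<Rightarrow> ('v set \<times> 'v set \<times> 'v set) set" where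
  "J_dist V M P = {(A,B,C) \<in> triples V. cond_indep P M A B C}"

definition faithful :: "'v set \<Rightarrow> ('v \<Rightarrow> 'b measure) \<Rightarrow> ('v \<Rightarrow> 'b) measure \<Rightarrow> 'v mgraph \<Rightarrow> bool" where
  "faithful V M P G \<longleftrightarrow> J_graph V G = J_dist V M P"

definition markov_equivalent :: "'v set \<Rightarrow> 'v mgraph \<Rightarrow> 'v mgraph \<Rightarrow> bool" where
  "markov_equivalent V G G' \<longleftrightarrow> J_graph V G = J_graph V G'"

definition pearl_minimal ::
  "'v set \<Rightarrow> 'v mgraph set \<Rightarrow> ('v \<Rightarrow> 'b measure) \<Rightarrow> ('v \<Rightarrow> 'b) measure \<Rightarrow> 'v mgraph \<Rightarrow> bool" where
  "pearl_minimal V GG M P G \<longleftrightarrow> G \<in> GG \<and> J_graph V G \<subseteq> J_dist V M P \<and>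
     \<not> (\<exists>G' \<in> GG. J_graph V G \<subset> J_graph V G' \<and> J_graph V G' \<subseteq> J_dist V M P)"

definition unique_pearl_minimal ::
  "'v set \<Rightarrow> 'v mgraph set \<Rightarrow> ('v \<Rightarrow> 'b measure) \<Rightarrow> ('v \<Rightarrow> 'b) measure \<Rightarrow> bool" where
  "unique_pearl_minimal V GG M P \<longleftrightarrow>
     (\<forall>G \<in> GG. \<forall>G' \<in> GG. pearl_minimal V GG M P G \<and> pearl_minimal V GG M P G'
        \<longrightarrow> markov_equivalent V G G')"

end

theory Submission
  imports Defs
begin

text \<open>Faithfulness gives uniqueness at once: a Pearl-minimal graph G' has
  J(G') \<subseteq> J(P) = J(G) and cannot lie strictly below the faithful graph G.

  Conversely, every independence (A, B, C) of P is witnessed by a DAG: the complete DAG without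
  edges between A and B, ordered so that C comes first and the remaining vertices last. It separates
  A from B given C, and each of its separations follows from (A, B, C) by symmetry, decomposition
  and weak union, which hold for the conditional independences of any distribution. So this DAG
  lies below some Pearl-minimal graph that separates A from B given C. When all Pearl-minimal
  graphs are Markov equivalent, one of them therefore has every independence of P among its
  separations, i.e. P is faithful to it.\<close>

section \<open>Conditional independence of sub-\<sigma>-algebras\<close>

lemma finite_measure_subalgebra_of_prob_space:
  "prob_space P \<Longrightarrow> subalgebra P F \<Longrightarrow> finite_measure_subalgebra P F"
  by (simp add: finite_measure_subalgebra_def finite_measure_subalgebra_axioms_def prob_space_def)

lemma integrable_indicator_prob_space:
  "prob_space P \<Longrightarrow> E \<in> sets P \<Longrightarrow> integrable P (indicator E :: _ \<Rightarrow> real)"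
  by (simp add: finite_measure.emeasure_finite prob_space_def less_top[symmetric])

lemma subalgebra_sets_subset: "subalgebra P F \<Longrightarrow> E \<in> sets F \<Longrightarrow> E \<in> sets P"
  by (auto simp: subalgebra_def)

lemma subalgebra_of_sets_subset:
  "subalgebra P G \<Longrightarrow> subalgebra P F \<Longrightarrow> sets F \<subseteq> sets G \<Longrightarrow> subalgebra G F"
  by (auto simp: subalgebra_def)

lemma set_integral_eq_on_sigma_sets:
  fixes f g :: "'a \<Rightarrow> real"
  assumes f: "integrable M f" and g: "integrable M g" and stable: "Int_stable G"
    and G: "G \<subseteq> sets M" and top: "space M \<in> G"
    and eq: "\<And>A. A \<in> G \<Longrightarrow> (\<integral>x\<in>A. f x \<partial>M) = (\<integral>x\<in>A. g x \<partial>M)"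
    and A: "A \<in> sigma_sets (space M) G"
  shows "(\<integral>x\<in>A. f x \<partial>M) = (\<integral>x\<in>A. g x \<partial>M)"
proof -
  have sigma_G: "sigma_sets (space M) G \<subseteq> sets M" using G by (rule sets.sigma_sets_subset)
  have set_integrable: "set_integrable M A h" if "A \<in> sets M" "integrable M h" for A and h :: "'a \<Rightarrow> real"
    unfolding set_integrable_def using integrable_mult_indicator that by blast
  have "G \<subseteq> Pow (space M)" using G sets.sets_into_space by blast
  from stable this A show ?thesis
  proof (induction rule: sigma_sets_induct_disjoint)
    case (basic A) then show ?case by (rule eq)
  next
    case empty then show ?case by (simp add: set_lebesgue_integral_def)
  next
    case (compl A)
    have A: "A \<in> sets M" using compl sigma_G by blast
    have split: "(\<integral>x\<in>space M. h x \<partial>M) = (\<integral>x\<in>A. h x \<partial>M) + (\<integral>x\<in>space M - A. h x \<partial>M)"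
      if "integrable M h" for h :: "'a \<Rightarrow> real"
    proof -
      have "space M = A \<union> (space M - A)" using A sets.sets_into_space by blast
      then show ?thesis
        by (metis set_integral_Un Diff_disjoint set_integrable A sets.compl_sets that)
    qed
    show ?case using split[OF f] split[OF g] eq[OF top] compl by linarith
  next
    case (union A)
    have A: "\<And>i. A i \<in> sets M" using union sigma_G by blast
    have disj: "\<And>i j. i \<noteq> j \<Longrightarrow> A i \<inter> A j = {}" using union(1) by (auto simp: disjoint_family_on_def)
    have U: "(\<Union>i. A i) \<in> sets M" using A by auto
    have "(\<integral>x\<in>(\<Union>i. A i). f x \<partial>M) = (\<Sum>i. (\<integral>x\<in>A i. f x \<partial>M))"
      by (rule lebesgue_integral_countable_add[OF A disj set_integrable[OF U f]])
    also have "\<dots> = (\<Sum>i. (\<integral>x\<in>A i. g x \<partial>M))" using union by simp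
    also have "\<dots> = (\<integral>x\<in>(\<Union>i. A i). g x \<partial>M)"
      by (rule lebesgue_integral_countable_add[OF A disj set_integrable[OF U g], symmetric])
    finally show ?case .
  qed
qed

definition cond_indep_subalg :: "'a measure \<Rightarrow> 'a measure \<Rightarrow> 'a measure \<Rightarrow> 'a measure \<Rightarrow> bool" where
  "cond_indep_subalg P FA FB FC \<longleftrightarrow> (\<forall>EA\<in>sets FA. \<forall>EB\<in>sets FB.
     AE x in P. real_cond_exp P FC (indicator (EA \<inter> EB)) x =
        real_cond_exp P FC (indicator EA) x * real_cond_exp P FC (indicator EB) x)"

lemma cond_indep_subalg_sym:
  assumes "cond_indep_subalg P FA FB FC"
  shows "cond_indep_subalg P FB FA FC"
  unfolding cond_indep_subalg_def
proof (intro ballI)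
  fix EB EA assume "EB \<in> sets FB" "EA \<in> sets FA"
  then have "AE x in P. real_cond_exp P FC (indicator (EA \<inter> EB)) x =
      real_cond_exp P FC (indicator EA) x * real_cond_exp P FC (indicator EB) x"
    using assms unfolding cond_indep_subalg_def by blast
  then show "AE x in P. real_cond_exp P FC (indicator (EB \<inter> EA)) x =
      real_cond_exp P FC (indicator EB) x * real_cond_exp P FC (indicator EA) x"
    by (simp add: Int_commute mult.commute)
qed

text \<open>E[1_A 1_B | FC] = E[1_B E[1_A | FBC] | FC] = E[1_B E[1_A | FC] | FC]
  = E[1_A | FC] E[1_B | FC]\<close>
lemma cond_indep_subalgI:
  assumes P: "prob_space P" and sA: "subalgebra P FA" and sB: "subalgebra P FB"
    and sC: "subalgebra P FC" and sBC: "subalgebra P FBC"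
    and B_BC: "sets FB \<subseteq> sets FBC" and C_BC: "sets FC \<subseteq> sets FBC"
    and eq: "\<And>EA. EA \<in> sets FA \<Longrightarrow>
      AE x in P. real_cond_exp P FBC (indicator EA) x = real_cond_exp P FC (indicator EA) x"
  shows "cond_indep_subalg P FA FB FC"
  unfolding cond_indep_subalg_def
proof (intro ballI)
  fix EA EB assume EA: "EA \<in> sets FA" and EB: "EB \<in> sets FB"
  interpret C: finite_measure_subalgebra P FC by (rule finite_measure_subalgebra_of_prob_space[OF P sC])
  interpret BC: finite_measure_subalgebra P FBC by (rule finite_measure_subalgebra_of_prob_space[OF P sBC])
  have [measurable]: "EA \<in> sets P" "EB \<in> sets P"
    using subalgebra_sets_subset sA sB EA EB by blast+
  define a :: "_ \<Rightarrow> real" where "a = indicator EA"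
  define b :: "_ \<Rightarrow> real" where "b = indicator EB"
  have [measurable]: "a \<in> borel_measurable P" "b \<in> borel_measurable P"
    unfolding a_def b_def by measurable
  have b_BC: "b \<in> borel_measurable FBC" unfolding b_def using EB B_BC by auto
  have int_a: "integrable P a" unfolding a_def by (rule integrable_indicator_prob_space[OF P]) simp
  have int_ba: "integrable P (\<lambda>x. b x * a x)"
    unfolding b_def using integrable_mult_indicator[OF _ int_a] by simp
  have int_ca: "integrable P (\<lambda>x. real_cond_exp P FC a x * b x)"
    unfolding b_def using integrable_mult_indicator[OF _ C.real_cond_exp_int(1)[OF int_a]]
    by (simp add: mult.commute)
  have indicator_Int: "indicator (EA \<inter> EB) = (\<lambda>x. b x * a x)"
    unfolding a_def b_def by (auto simp: indicator_def)
  have tower: "AE x in P. real_cond_exp P FC (real_cond_exp P FBC (\<lambda>x. b x * a x)) x =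
      real_cond_exp P FC (\<lambda>x. b x * a x) x"
    by (rule C.real_cond_exp_nested_subalg[OF sBC subalgebra_of_sets_subset[OF sBC sC C_BC] int_ba])
  have pull_out_b: "AE x in P. real_cond_exp P FBC (\<lambda>x. b x * a x) x = b x * real_cond_exp P FBC a x"
    by (rule BC.real_cond_exp_mult[OF b_BC _ int_ba]) simp
  have "AE x in P. real_cond_exp P FC (real_cond_exp P FBC (\<lambda>x. b x * a x)) x
     = real_cond_exp P FC (\<lambda>x. real_cond_exp P FC a x * b x) x"
    by (rule C.real_cond_exp_cong) (use pull_out_b eq[OF EA] in \<open>auto simp: a_def mult.commute\<close>)
  moreover have "AE x in P. real_cond_exp P FC (\<lambda>x. real_cond_exp P FC a x * b x) x =
      real_cond_exp P FC a x * real_cond_exp P FC b x"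
    by (rule C.real_cond_exp_mult) (auto simp: int_ca)
  ultimately show "AE x in P. real_cond_exp P FC (indicator (EA \<inter> EB)) x =
        real_cond_exp P FC (indicator EA) x * real_cond_exp P FC (indicator EB) x"
    using tower unfolding indicator_Int a_def[symmetric] b_def[symmetric] by eventually_elim simp
qed

lemma set_integral_indicator_eq_cond_exp_if_cond_indep_subalg:
  assumes P: "prob_space P" and sA: "subalgebra P FA" and sB: "subalgebra P FB"
    and sC: "subalgebra P FC" and indep: "cond_indep_subalg P FA FB FC"
    and EA: "EA \<in> sets FA" and EB: "EB \<in> sets FB" and EC: "EC \<in> sets FC"
  shows "(\<integral>x\<in>EB \<inter> EC. indicator EA x \<partial>P) = (\<integral>x\<in>EB \<inter> EC. real_cond_exp P FC (indicator EA) x \<partial>P)"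
proof -
  interpret C: finite_measure_subalgebra P FC by (rule finite_measure_subalgebra_of_prob_space[OF P sC])
  have [measurable]: "EA \<in> sets P" "EB \<in> sets P" "EC \<in> sets P"
    using subalgebra_sets_subset sA sB sC EA EB EC by blast+
  define g where "g = real_cond_exp P FC (indicator EA)"
  have int_g: "integrable P g"
    unfolding g_def by (rule C.real_cond_exp_int(1)[OF integrable_indicator_prob_space[OF P]]) simp
  have int_gb: "integrable P (\<lambda>x. g x * indicator EB x)"
    using integrable_mult_indicator[OF _ int_g] by (simp add: mult.commute)
  have "(\<integral>x\<in>EB \<inter> EC. indicator EA x \<partial>P) = (\<integral>x\<in>EC. indicator (EA \<inter> EB) x \<partial>P)"
    unfolding set_lebesgue_integral_def by (rule Bochner_Integration.integral_cong) (auto simp: indicator_def)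
  also have "\<dots> = (\<integral>x\<in>EC. real_cond_exp P FC (indicator (EA \<inter> EB)) x \<partial>P)"
    by (rule C.real_cond_exp_intA[OF integrable_indicator_prob_space[OF P] EC]) simp
  also have "\<dots> = (\<integral>x\<in>EC. g x * real_cond_exp P FC (indicator EB) x \<partial>P)"
  proof (rule set_lebesgue_integral_cong_AE)
    have "AE x in P. real_cond_exp P FC (indicator (EA \<inter> EB)) x = g x * real_cond_exp P FC (indicator EB) x"
      using indep EA EB unfolding cond_indep_subalg_def g_def by blast
    then show "AE x \<in> EC in P. real_cond_exp P FC (indicator (EA \<inter> EB)) x = g x * real_cond_exp P FC (indicator EB) x"
      by eventually_elim simp
  qed (simp_all add: g_def)
  also have "\<dots> = (\<integral>x\<in>EC. real_cond_exp P FC (\<lambda>x. g x * indicator EB x) x \<partial>P)"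
  proof (rule set_lebesgue_integral_cong_AE)
    have "AE x in P. real_cond_exp P FC (\<lambda>x. g x * indicator EB x) x = g x * real_cond_exp P FC (indicator EB) x"
      by (rule C.real_cond_exp_mult) (use int_gb in \<open>simp_all add: g_def\<close>)
    then show "AE x \<in> EC in P. g x * real_cond_exp P FC (indicator EB) x = real_cond_exp P FC (\<lambda>x. g x * indicator EB x) x"
      by eventually_elim simp
  qed (simp_all add: g_def)
  also have "\<dots> = (\<integral>x\<in>EC. g x * indicator EB x \<partial>P)"
    by (rule C.real_cond_exp_intA[OF int_gb EC, symmetric])
  also have "\<dots> = (\<integral>x\<in>EB \<inter> EC. g x \<partial>P)"
    unfolding set_lebesgue_integral_def by (rule Bochner_Integration.integral_cong) (auto simp: indicator_def)
  finally show ?thesis unfolding g_def .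
qed

lemma cond_indep_subalgD:
  assumes P: "prob_space P" and sA: "subalgebra P FA" and sB: "subalgebra P FB"
    and sC: "subalgebra P FC" and sBC: "subalgebra P FBC" and C_BC: "sets FC \<subseteq> sets FBC"
    and gen: "sets FBC \<subseteq> sigma_sets (space P) {EB \<inter> EC | EB EC. EB \<in> sets FB \<and> EC \<in> sets FC}"
    and indep: "cond_indep_subalg P FA FB FC" and EA: "EA \<in> sets FA"
  shows "AE x in P. real_cond_exp P FBC (indicator EA) x = real_cond_exp P FC (indicator EA) x"
proof -
  interpret C: finite_measure_subalgebra P FC by (rule finite_measure_subalgebra_of_prob_space[OF P sC])
  interpret BC: finite_measure_subalgebra P FBC by (rule finite_measure_subalgebra_of_prob_space[OF P sBC])
  let ?G = "{EB \<inter> EC | EB EC. EB \<in> sets FB \<and> EC \<in> sets FC}"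
  have int_a: "integrable P (indicator EA :: _ \<Rightarrow> real)"
    using integrable_indicator_prob_space[OF P] subalgebra_sets_subset[OF sA EA] .
  have stable: "Int_stable ?G"
    unfolding Int_stable_def
  proof (intro ballI)
    fix X Y assume "X \<in> ?G" "Y \<in> ?G"
    then obtain EB EC EB' EC' where "X = EB \<inter> EC" "Y = EB' \<inter> EC'" "EB \<in> sets FB" "EC \<in> sets FC"
      "EB' \<in> sets FB" "EC' \<in> sets FC" by blast
    then show "X \<inter> Y \<in> ?G" by (intro CollectI exI[of _ "EB \<inter> EB'"] exI[of _ "EC \<inter> EC'"]) auto
  qed
  have G: "?G \<subseteq> sets P"
    using subalgebra_sets_subset[OF sB] subalgebra_sets_subset[OF sC] by blast
  have "space P \<in> sets FB" "space P \<in> sets FC"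
    using sB sC by (metis sets.top subalgebra_def)+
  then have top: "space P \<in> ?G"
    by (intro CollectI exI[of _ "space P"]) simp
  have eq_on_G: "(\<integral>x\<in>X. indicator EA x \<partial>P) = (\<integral>x\<in>X. real_cond_exp P FC (indicator EA) x \<partial>P)"
    if "X \<in> ?G" for X
    using that set_integral_indicator_eq_cond_exp_if_cond_indep_subalg[OF P sA sB sC indep EA] by blast
  show ?thesis
  proof (rule BC.real_cond_exp_charact)
    fix X assume "X \<in> sets FBC"
    then show "(\<integral>x\<in>X. indicator EA x \<partial>P) = (\<integral>x\<in>X. real_cond_exp P FC (indicator EA) x \<partial>P)"
      using set_integral_eq_on_sigma_sets[OF int_a C.real_cond_exp_int(1)[OF int_a] stable G top eq_on_G] gen
      by blast
  next
    show "real_cond_exp P FC (indicator EA) \<in> borel_measurable FBC"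
      by (rule measurable_from_subalg[OF subalgebra_of_sets_subset[OF sBC sC C_BC]]) simp
  qed (use int_a C.real_cond_exp_int(1)[OF int_a] in auto)
qed

section \<open>Semi-graphoid properties of conditional independence\<close>

lemma space_distribution_on: "distribution_on V M P \<Longrightarrow> space P = space (PiM V M)"
  unfolding distribution_on_def by (metis sets_eq_imp_space_eq)

lemma restrict_in_space_PiM:
  assumes "distribution_on V M P" "S \<subseteq> V" "x \<in> space P"
  shows "restrict x S \<in> space (PiM S M)"
  using assms space_distribution_on[OF assms(1)] by (auto simp: space_PiM PiE_def Pi_def)

lemma subalgebra_var_algebra:
  assumes d: "distribution_on V M P" and S: "S \<subseteq> V"
  shows "subalgebra P (var_algebra P M S)"
proof -
  have "(\<lambda>x. restrict x S) \<in> measurable P (PiM S M)"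
    using measurable_restrict_subset[OF S, of M] d
    by (simp add: distribution_on_def measurable_cong_sets[of P "PiM V M" "PiM S M" "PiM S M"])
  then have "sets (vimage_algebra (space P) (\<lambda>x. restrict x S) (PiM S M)) \<subseteq> sets P"
    by (intro sets_image_in_sets) simp_all
  then show ?thesis unfolding subalgebra_def var_algebra_def by simp
qed

lemma measurable_restrict_var_algebra:
  assumes "distribution_on V M P" "S \<subseteq> V"
  shows "(\<lambda>x. restrict x S) \<in> measurable (var_algebra P M S) (PiM S M)"
  unfolding var_algebra_def
  by (rule measurable_vimage_algebra1) (use restrict_in_space_PiM[OF assms] in blast)

lemma sets_var_algebra_mono:
  assumes d: "distribution_on V M P" and ST: "S \<subseteq> T" and T: "T \<subseteq> V"
  shows "sets (var_algebra P M S) \<subseteq> sets (var_algebra P M T)"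
proof -
  have restrict_restrict: "(\<lambda>x. restrict (restrict x T) S) = (\<lambda>x. restrict x S)"
    using ST by (auto simp: restrict_def fun_eq_iff)
  have "(\<lambda>x. restrict x S) \<in> measurable (var_algebra P M T) (PiM S M)"
    using measurable_compose[OF measurable_restrict_var_algebra[OF d T] measurable_restrict_subset[OF ST]]
    unfolding restrict_restrict .
  then show ?thesis unfolding var_algebra_def[of P M S]
    by (intro sets_image_in_sets) (simp_all add: var_algebra_def)
qed

lemma sets_var_algebra_empty:
  "sets (var_algebra P M {}) \<subseteq> {{}, space P}"
proof -
  have r: "(\<lambda>x. restrict x {}) = (\<lambda>x k. undefined)" by (auto simp: fun_eq_iff)
  have "(\<lambda>x. restrict x {}) \<in> space P \<rightarrow> space (PiM {} M)" by (simp add: r space_PiM_empty)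
  then show ?thesis unfolding var_algebra_def
    by (subst sets_vimage_algebra2) (auto simp: sets_PiM_empty r)
qed

lemma var_algebra_component_set:
  assumes d: "distribution_on V M P" and K: "K \<subseteq> V" "i \<in> K" and A: "A \<in> sets (M i)"
  shows "{x \<in> space P. x i \<in> A} \<in> sets (var_algebra P M K)"
proof -
  have "(\<lambda>f. f i) -` A \<inter> space (PiM K M) \<in> sets (PiM K M)"
    by (rule measurable_sets[OF measurable_component_singleton[OF \<open>i \<in> K\<close>, of M] A])
  then have "(\<lambda>x. restrict x K) -` ((\<lambda>f. f i) -` A \<inter> space (PiM K M)) \<inter> space P \<in> sets (var_algebra P M K)"
    unfolding var_algebra_def by (rule in_vimage_algebra)
  moreover have "(\<lambda>x. restrict x K) -` ((\<lambda>f. f i) -` A \<inter> space (PiM K M)) \<inter> space P = {x \<in> space P. x i \<in> A}"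
    using restrict_in_space_PiM[OF d K(1)] K(2) by auto
  ultimately show ?thesis by simp
qed

lemma sets_var_algebra_Un_subset:
  assumes d: "distribution_on V M P" and S: "S \<subseteq> V" and T: "T \<subseteq> V"
  shows "sets (var_algebra P M (S \<union> T)) \<subseteq> sigma_sets (space P)
     {ES \<inter> ET | ES ET. ES \<in> sets (var_algebra P M S) \<and> ET \<in> sets (var_algebra P M T)}"
proof -
  let ?G = "{ES \<inter> ET | ES ET. ES \<in> sets (var_algebra P M S) \<and> ET \<in> sets (var_algebra P M T)}"
  have sS: "subalgebra P (var_algebra P M S)" and sT: "subalgebra P (var_algebra P M T)"
    using subalgebra_var_algebra[OF d] S T by auto
  have G: "?G \<subseteq> Pow (space P)"
    using subalgebra_sets_subset[OF sS] subalgebra_sets_subset[OF sT] sets.sets_into_space by blast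
  have top: "space P \<in> sets (var_algebra P M S)" "space P \<in> sets (var_algebra P M T)"
    using sS sT by (metis sets.top subalgebra_def)+
  have component_in_G: "{x \<in> space P. x i \<in> A} \<in> ?G" if i: "i \<in> S \<union> T" and A: "A \<in> sets (M i)" for i A
  proof (cases "i \<in> S")
    case True
    then show ?thesis
      using var_algebra_component_set[OF d S True A] top(2)
      by (intro CollectI exI[of _ "{x \<in> space P. x i \<in> A}"] exI[of _ "space P"]) auto
  next
    case False
    then have "i \<in> T" using i by auto
    then show ?thesis
      using var_algebra_component_set[OF d T _ A] top(1)
      by (intro CollectI exI[of _ "space P"] exI[of _ "{x \<in> space P. x i \<in> A}"]) auto
  qed
  have "(\<lambda>x. restrict x (S \<union> T)) \<in> measurable (sigma (space P) ?G) (PiM (S \<union> T) M)"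
  proof (rule measurable_PiM_single)
    show "(\<lambda>x. restrict x (S \<union> T)) \<in> space (sigma (space P) ?G) \<rightarrow> (\<Pi>\<^sub>E i\<in>S \<union> T. space (M i))"
      using restrict_in_space_PiM[OF d, of "S \<union> T"] S T G by (auto simp: space_PiM)
  next
    fix A i assume "i \<in> S \<union> T" "A \<in> sets (M i)"
    then show "{\<omega> \<in> space (sigma (space P) ?G). restrict \<omega> (S \<union> T) i \<in> A} \<in> sets (sigma (space P) ?G)"
      using component_in_G G by auto
  qed
  then have "sets (var_algebra P M (S \<union> T)) \<subseteq> sets (sigma (space P) ?G)"
    unfolding var_algebra_def[of P M "S \<union> T"] by (intro sets_image_in_sets) (use G in auto)
  then show ?thesis using G by simp
qed

lemma cond_indep_iff_cond_indep_subalg: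
  "cond_indep P M A B C \<longleftrightarrow>
    cond_indep_subalg P (var_algebra P M A) (var_algebra P M B) (var_algebra P M C)"
  unfolding cond_indep_def cond_indep_subalg_def ..

lemma cond_indep_sym: "cond_indep P M A B C \<Longrightarrow> cond_indep P M B A C"
  by (simp add: cond_indep_iff_cond_indep_subalg cond_indep_subalg_sym)

lemma cond_indep_decomposition:
  assumes "distribution_on V M P" "A' \<subseteq> A" "B' \<subseteq> B" "A \<subseteq> V" "B \<subseteq> V"
    and "cond_indep P M A B C"
  shows "cond_indep P M A' B' C"
  using assms sets_var_algebra_mono[OF assms(1,2,4)] sets_var_algebra_mono[OF assms(1,3,5)]
  unfolding cond_indep_def by blast

text \<open>Both independences are rephrased as conditional expectations given B \<union> C: the hypothesis
  lets conditioning on B \<union> C be replaced by C, hence by any C \<union> W in between.\<close>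
lemma cond_indep_weak_union:
  assumes d: "distribution_on V M P" and V: "A \<subseteq> V" "B \<subseteq> V" "C \<subseteq> V" and W: "W \<subseteq> B"
    and indep: "cond_indep P M A B C"
  shows "cond_indep P M A B (C \<union> W)"
proof -
  have P: "prob_space P" using d by (simp add: distribution_on_def)
  let ?F = "var_algebra P M"
  have sA: "subalgebra P (?F A)" and sB: "subalgebra P (?F B)" and sC: "subalgebra P (?F C)"
    and sCW: "subalgebra P (?F (C \<union> W))" and sBC: "subalgebra P (?F (B \<union> C))"
    using subalgebra_var_algebra[OF d] V W by auto
  have B_BC: "sets (?F B) \<subseteq> sets (?F (B \<union> C))" and C_BC: "sets (?F C) \<subseteq> sets (?F (B \<union> C))"
    and CW_BC: "sets (?F (C \<union> W)) \<subseteq> sets (?F (B \<union> C))" and C_CW: "sets (?F C) \<subseteq> sets (?F (C \<union> W))"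
    by (rule sets_var_algebra_mono[OF d]; use V W in auto)+
  interpret CW: finite_measure_subalgebra P "?F (C \<union> W)"
    by (rule finite_measure_subalgebra_of_prob_space[OF P sCW])
  interpret C: finite_measure_subalgebra P "?F C"
    by (rule finite_measure_subalgebra_of_prob_space[OF P sC])
  show ?thesis unfolding cond_indep_iff_cond_indep_subalg
  proof (rule cond_indep_subalgI[OF P sA sB sCW sBC B_BC CW_BC])
    fix EA assume EA: "EA \<in> sets (?F A)"
    define a :: "_ \<Rightarrow> real" where "a = indicator EA"
    have int_a: "integrable P a"
      unfolding a_def by (rule integrable_indicator_prob_space[OF P subalgebra_sets_subset[OF sA EA]])
    have BC_C: "AE x in P. real_cond_exp P (?F (B \<union> C)) a x = real_cond_exp P (?F C) a x"
      unfolding a_def using indep[unfolded cond_indep_iff_cond_indep_subalg] EA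
      by (intro cond_indep_subalgD[OF P sA sB sC sBC C_BC sets_var_algebra_Un_subset[OF d V(2,3)]])
    have "AE x in P. real_cond_exp P (?F (C \<union> W)) (real_cond_exp P (?F (B \<union> C)) a) x =
        real_cond_exp P (?F (C \<union> W)) a x"
      by (rule CW.real_cond_exp_nested_subalg[OF sBC subalgebra_of_sets_subset[OF sBC sCW CW_BC] int_a])
    moreover have "AE x in P. real_cond_exp P (?F (C \<union> W)) (real_cond_exp P (?F (B \<union> C)) a) x =
        real_cond_exp P (?F (C \<union> W)) (real_cond_exp P (?F C) a) x"
      by (rule CW.real_cond_exp_cong[OF BC_C]) simp_all
    moreover have "AE x in P. real_cond_exp P (?F (C \<union> W)) (real_cond_exp P (?F C) a) x =
        real_cond_exp P (?F C) a x"
      by (rule CW.real_cond_exp_F_meas[OF C.real_cond_exp_int(1)[OF int_a]])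
         (rule measurable_from_subalg[OF subalgebra_of_sets_subset[OF sCW sC C_CW]], simp)
    ultimately show "AE x in P. real_cond_exp P (?F (B \<union> C)) (indicator EA) x =
        real_cond_exp P (?F (C \<union> W)) (indicator EA) x"
      using BC_C unfolding a_def by eventually_elim linarith
  qed
qed

lemma cond_indep_empty_left:
  assumes d: "distribution_on V M P" and V: "B \<subseteq> V" "C \<subseteq> V"
  shows "cond_indep P M {} B C"
  unfolding cond_indep_def
proof (intro ballI)
  fix EA EB assume EA: "EA \<in> sets (var_algebra P M {})" and EB: "EB \<in> sets (var_algebra P M B)"
  have P: "prob_space P" using d by (simp add: distribution_on_def)
  have sB: "subalgebra P (var_algebra P M B)" and sC: "subalgebra P (var_algebra P M C)"
    using subalgebra_var_algebra[OF d] V by auto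
  interpret C: finite_measure_subalgebra P "var_algebra P M C"
    by (rule finite_measure_subalgebra_of_prob_space[OF P sC])
  have "EA = {} \<or> EA = space P" using sets_var_algebra_empty EA by blast
  then show "AE x in P. real_cond_exp P (var_algebra P M C) (indicator (EA \<inter> EB)) x =
        real_cond_exp P (var_algebra P M C) (indicator EA) x * real_cond_exp P (var_algebra P M C) (indicator EB) x"
  proof
    assume "EA = {}"
    then have zero: "indicator EA = (\<lambda>x. 0 :: real)" "indicator (EA \<inter> EB) = (\<lambda>x. 0 :: real)"
      by auto
    have "AE x in P. real_cond_exp P (var_algebra P M C) (\<lambda>x. 0) x = 0"
      by (rule C.real_cond_exp_F_meas) simp_all
    then show ?thesis unfolding zero by eventually_elim simp
  next
    assume EA: "EA = space P"
    have Int_EB: "space P \<inter> EB = EB"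
      using subalgebra_sets_subset[OF sB EB] sets.sets_into_space by blast
    have "space P \<in> sets (var_algebra P M C)" using sC by (metis sets.top subalgebra_def)
    then have "AE x in P. real_cond_exp P (var_algebra P M C) (indicator (space P)) x = indicator (space P) x"
      by (intro C.real_cond_exp_F_meas) (simp_all add: integrable_indicator_prob_space[OF P])
    then show ?thesis using AE_space unfolding EA Int_EB by eventually_elim simp
  qed
qed

lemma cond_indep_closure:
  assumes d: "distribution_on V M P" and V: "A \<subseteq> V" "B \<subseteq> V" "C \<subseteq> V"
    and indep: "cond_indep P M A B C" and XY: "X \<subseteq> A" "Y \<subseteq> B" and S: "C \<subseteq> S" "S \<subseteq> A \<union> B \<union> C"
  shows "cond_indep P M X Y S"
proof -
  have "cond_indep P M B A (C \<union> (S \<inter> B))"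
    by (rule cond_indep_sym[OF cond_indep_weak_union[OF d V Int_lower2 indep]])
  moreover have "C \<union> (S \<inter> B) \<subseteq> V" using V by auto
  ultimately have "cond_indep P M B A (C \<union> (S \<inter> B) \<union> (S \<inter> A))"
    using cond_indep_weak_union[OF d V(2) V(1) _ Int_lower2] by blast
  moreover have "C \<union> (S \<inter> B) \<union> (S \<inter> A) = S" using S by auto
  ultimately have "cond_indep P M Y X S"
    using cond_indep_decomposition[OF d XY(2) XY(1) V(2) V(1)] by simp
  then show ?thesis by (rule cond_indep_sym)
qed

section \<open>d-separation in the DAG of an independence triple\<close>

definition collider_at :: "etype list \<Rightarrow> nat \<Rightarrow> bool" where
  "collider_at es k \<longleftrightarrow> 0 < k \<and> k < length es \<and> es ! (k - 1) = Fwd \<and> es ! k = Bwd"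

definition d_connecting :: "'v mgraph \<Rightarrow> 'v set \<Rightarrow> 'v list \<Rightarrow> etype list \<Rightarrow> bool" where
  "d_connecting G S vs es \<longleftrightarrow> walk G vs es \<and>
     (\<forall>k \<le> length es. if collider_at es k then vs ! k \<in> S else vs ! k \<notin> S)"

lemma walk_step:
  "walk G vs es \<Longrightarrow> k < length es \<Longrightarrow> step G (es ! k) (vs ! k) (vs ! Suc k)"
  by (auto simp: walk_def)

lemma directed_walk_step:
  assumes "und G = {}" "bid G = {}" "walk G vs es" "k < length es"
  shows "es ! k = Fwd \<or> es ! k = Bwd"
  using walk_step[OF assms(3,4)] assms(1,2) by (cases "es ! k") auto

lemma section_directed_walk_iff:
  assumes "und G = {}" "bid G = {}" "walk G vs es"
  shows "section es p q \<longleftrightarrow> p = q \<and> q \<le> length es"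
proof
  assume pq: "section es p q"
  then have "\<not> p < q" using directed_walk_step[OF assms, of p] by (force simp: section_def)
  then show "p = q \<and> q \<le> length es" using pq by (simp add: section_def)
next
  assume "p = q \<and> q \<le> length es"
  then show "section es p q"
    using directed_walk_step[OF assms, of q] directed_walk_step[OF assms, of "q - 1"]
    by (force simp: section_def)
qed

lemma m_connecting_eq_d_connecting:
  assumes G: "und G = {}" "bid G = {}"
  shows "m_connecting G S vs es \<longleftrightarrow> d_connecting G S vs es"
proof (cases "walk G vs es")
  case True
  have collider: "collider_section es k k \<longleftrightarrow> collider_at es k" if "k \<le> length es" for k
    using section_directed_walk_iff[OF G True, of k k] that
      directed_walk_step[OF G True, of k] directed_walk_step[OF G True, of "k - 1"]
      less_imp_diff_less[of k "length es" 1]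
    unfolding collider_section_def collider_at_def head_at_end_def head_at_start_def by auto
  show ?thesis
    unfolding m_connecting_def d_connecting_def section_directed_walk_iff[OF G True]
    using collider by auto
qed (simp add: m_connecting_def d_connecting_def)

lemma d_connecting_edge:
  assumes "step G e x y" "e = Fwd \<or> e = Bwd" "x \<notin> S" "y \<notin> S"
  shows "d_connecting G S [x, y] [e]"
  using assms by (auto simp: d_connecting_def walk_def collider_at_def le_Suc_eq)

lemma d_connecting_fork:
  assumes "(c, x) \<in> dir G" "(c, y) \<in> dir G" "x \<notin> S" "y \<notin> S" "c \<notin> S"
  shows "d_connecting G S [x, c, y] [Bwd, Fwd]"
  using assms by (auto simp: d_connecting_def walk_def collider_at_def le_Suc_eq less_Suc_eq)

lemma d_connecting_collider:
  assumes "(x, d) \<in> dir G" "(y, d) \<in> dir G" "x \<notin> S" "y \<notin> S" "d \<in> S"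
  shows "d_connecting G S [x, d, y] [Fwd, Bwd]"
  using assms by (auto simp: d_connecting_def walk_def collider_at_def le_Suc_eq less_Suc_eq)

lemma separated_not_d_connecting:
  assumes "und G = {}" "bid G = {}" "separated G X Y S" "hd vs \<in> X" "last vs \<in> Y"
  shows "\<not> d_connecting G S vs es"
  using assms by (auto simp: separated_def m_connecting_eq_d_connecting)

definition layer :: "'v set \<Rightarrow> 'v set \<Rightarrow> 'v set \<Rightarrow> 'v \<Rightarrow> nat" where
  "layer A B C v = (if v \<in> C then 0 else if v \<in> A \<or> v \<in> B then 1 else 2)"

definition triple_rank :: "'v set \<Rightarrow> 'v set \<Rightarrow> 'v set \<Rightarrow> ('v \<Rightarrow> nat) \<Rightarrow> nat \<Rightarrow> 'v \<Rightarrow> nat" where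
  "triple_rank A B C f N v = layer A B C v * N + f v"

text \<open>The complete DAG on V without the edges between A and B, directed along the layers C,
  A \<union> B, V - (A \<union> B \<union> C), and within a layer along an injective numbering f < N of V.\<close>
definition triple_dag :: "'v set \<Rightarrow> 'v set \<Rightarrow> 'v set \<Rightarrow> 'v set \<Rightarrow> ('v \<Rightarrow> nat) \<Rightarrow> nat \<Rightarrow> 'v mgraph" where
  "triple_dag V A B C f N = \<lparr>dir = {(u, v). u \<in> V \<and> v \<in> V \<and> triple_rank A B C f N u < triple_rank A B C f N v \<and>
      \<not> ((u \<in> A \<and> v \<in> B) \<or> (u \<in> B \<and> v \<in> A))}, und = {}, bid = {}\<rparr>"

lemma dir_triple_dag:
  "(u, v) \<in> dir (triple_dag V A B C f N) \<longleftrightarrow> u \<in> V \<and> v \<in> V \<and>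
      triple_rank A B C f N u < triple_rank A B C f N v \<and> \<not> ((u \<in> A \<and> v \<in> B) \<or> (u \<in> B \<and> v \<in> A))"
  by (simp add: triple_dag_def)

lemma und_triple_dag [simp]: "und (triple_dag V A B C f N) = {}"
  and bid_triple_dag [simp]: "bid (triple_dag V A B C f N) = {}"
  by (simp_all add: triple_dag_def)

lemma triple_rank_inj:
  assumes "inj_on f V" "\<forall>v\<in>V. f v < N" "u \<in> V" "v \<in> V" "triple_rank A B C f N u = triple_rank A B C f N v"
  shows "u = v"
proof -
  have "f u < N" "f v < N" using assms by auto
  then have "triple_rank A B C f N u mod N = f u" "triple_rank A B C f N v mod N = f v"
    by (simp_all add: triple_rank_def)
  then show ?thesis using assms by (metis inj_onD)
qed

lemma layer_le_if_triple_rank_less: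
  assumes "f u < N" "f v < N" "triple_rank A B C f N u < triple_rank A B C f N v"
  shows "layer A B C u \<le> layer A B C v"
proof (rule ccontr)
  assume "\<not> ?thesis"
  then have "(layer A B C v + 1) * N \<le> layer A B C u * N" by (intro mult_right_mono) simp_all
  then show False using assms unfolding triple_rank_def by (simp add: algebra_simps)
qed

lemma triple_rank_less_if_layer_less:
  assumes "f u < N" "layer A B C u < layer A B C v"
  shows "triple_rank A B C f N u < triple_rank A B C f N v"
proof -
  have "(layer A B C u + 1) * N \<le> layer A B C v * N" using assms(2) by (intro mult_right_mono) auto
  then show ?thesis using assms unfolding triple_rank_def by (simp add: algebra_simps)
qed

lemma DAG_triple_dag: "DAG V (triple_dag V A B C f N)"
proof -
  have "dir (triple_dag V A B C f N) \<subseteq> inv_image less_than (triple_rank A B C f N)"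
    by (auto simp: dir_triple_dag)
  then have "acyclic (dir (triple_dag V A B C f N))"
    by (intro wf_acyclic wf_subset[OF wf_inv_image[OF wf_less_than]])
  then show ?thesis
    by (auto simp: DAG_def mixed_graph_def triple_dag_def sym_def)
qed

lemma triple_dag_adjacent:
  assumes "inj_on f V" "\<forall>v\<in>V. f v < N" "u \<in> V" "v \<in> V" "u \<noteq> v"
    and "\<not> ((u \<in> A \<and> v \<in> B) \<or> (u \<in> B \<and> v \<in> A))"
  shows "(u, v) \<in> dir (triple_dag V A B C f N) \<or> (v, u) \<in> dir (triple_dag V A B C f N)"
proof -
  have "triple_rank A B C f N u \<noteq> triple_rank A B C f N v" using triple_rank_inj assms by metis
  then show ?thesis using assms by (auto simp: dir_triple_dag linorder_neq_iff)
qed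

lemma triple_dag_walk_edge:
  assumes "walk (triple_dag V A B C f N) vs es" "j < length es"
  shows "es ! j = Fwd \<and> (vs ! j, vs ! Suc j) \<in> dir (triple_dag V A B C f N) \<or>
         es ! j = Bwd \<and> (vs ! Suc j, vs ! j) \<in> dir (triple_dag V A B C f N)"
  using walk_step[OF assms] by (cases "es ! j") simp_all

text \<open>Once a d-connecting walk given C has entered the top layer by a forward edge, it can never
  leave it: a backward edge would create a collider, which would have to lie in the bottom
  layer C.\<close>
lemma d_connecting_triple_dag_top_layer:
  assumes bd: "\<forall>v\<in>V. f v < N"
    and dc: "d_connecting (triple_dag V A B C f N) C vs es"
    and i: "0 < i" "i \<le> length es" and fwd: "es ! (i - 1) = Fwd" and top: "layer A B C (vs ! i) = 2"
  shows "layer A B C (vs ! length es) = 2"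
proof -
  let ?G = "triple_dag V A B C f N"
  have w: "walk ?G vs es" using dc by (simp add: d_connecting_def)
  have "layer A B C (vs ! k) = 2 \<and> es ! (k - 1) = Fwd" if "i \<le> k" "k \<le> length es" for k
    using that
  proof (induction k rule: dec_induct)
    case base then show ?case using top fwd by simp
  next
    case (step j)
    then have j: "j < length es" and IH: "layer A B C (vs ! j) = 2" "es ! (j - 1) = Fwd" by auto
    then have "es ! j \<noteq> Bwd"
      using dc i(1) step.hyps(1) by (fastforce simp: d_connecting_def collider_at_def layer_def)
    then have edge: "(vs ! j, vs ! Suc j) \<in> dir ?G" and "es ! j = Fwd"
      using triple_dag_walk_edge[OF w j] by auto
    have "layer A B C (vs ! j) \<le> layer A B C (vs ! Suc j)"
      using edge bd by (intro layer_le_if_triple_rank_less[of f _ N]) (auto simp: dir_triple_dag)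
    then show ?case using IH \<open>es ! j = Fwd\<close> by (auto simp: layer_def split: if_splits)
  qed
  then show ?thesis using i by blast
qed

text \<open>A d-connecting walk from A to B given C would have to leave A at a vertex outside B
  (there are no edges between A and B). That vertex cannot be in C, as the edge into it would
  point away from it, so it lies in the top layer, entered by a forward edge.\<close>
lemma separated_triple_dag:
  assumes bd: "\<forall>v\<in>V. f v < N" and t: "(A, B, C) \<in> triples V"
  shows "separated (triple_dag V A B C f N) A B C"
  unfolding separated_def m_connecting_eq_d_connecting[OF und_triple_dag bid_triple_dag]
proof clarify
  fix vs es
  let ?G = "triple_dag V A B C f N"
  assume dc: "d_connecting ?G C vs es" and hd: "hd vs \<in> A" and last: "last vs \<in> B"
  have disj: "A \<inter> B = {}" "A \<inter> C = {}" "B \<inter> C = {}" using t by (auto simp: triples_def)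
  have w: "walk ?G vs es" using dc by (simp add: d_connecting_def)
  define n where "n = length es"
  have len: "length vs = Suc n" using w by (simp add: walk_def n_def)
  then have "vs \<noteq> []" by auto
  then have start: "vs ! 0 \<in> A" and end_B: "vs ! n \<in> B"
    using hd last len by (simp_all add: hd_conv_nth last_conv_nth)
  define k where "k = (LEAST k. vs ! k \<notin> A)"
  have "vs ! n \<notin> A" using end_B disj by blast
  then have k: "vs ! k \<notin> A" "k \<le> n" unfolding k_def by (rule LeastI, rule Least_le)
  then have "0 < k" using start by (cases k) auto
  define j where "j = k - 1"
  have jk: "Suc j = k" and "j < n" using \<open>0 < k\<close> k by (auto simp: j_def)
  have "vs ! j \<in> A" using not_less_Least[of j "\<lambda>k. vs ! k \<notin> A"] jk by (auto simp: k_def)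
  then have layer_j: "layer A B C (vs ! j) = 1" using disj by (auto simp: layer_def)
  have edge: "es ! j = Fwd \<and> (vs ! j, vs ! k) \<in> dir ?G \<or> es ! j = Bwd \<and> (vs ! k, vs ! j) \<in> dir ?G"
    using triple_dag_walk_edge[OF w \<open>j < n\<close>[unfolded n_def]] jk by simp
  then have V: "vs ! j \<in> V" "vs ! k \<in> V" and "vs ! k \<notin> B"
    using \<open>vs ! j \<in> A\<close> by (auto simp: dir_triple_dag)
  show False
  proof (cases "vs ! k \<in> C")
    case True
    then have "triple_rank A B C f N (vs ! k) < triple_rank A B C f N (vs ! j)"
      using bd V layer_j by (intro triple_rank_less_if_layer_less) (auto simp: layer_def)
    then have "es ! j = Bwd" using edge by (auto simp: dir_triple_dag)
    then have "\<not> collider_at es k" using jk by (auto simp: collider_at_def)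
    then show False using dc True k(2) by (auto simp: d_connecting_def n_def)
  next
    case False
    then have layer_k: "layer A B C (vs ! k) = 2" using k \<open>vs ! k \<notin> B\<close> by (simp add: layer_def)
    have "es ! j = Fwd"
    proof (rule ccontr)
      assume "es ! j \<noteq> Fwd"
      then have "triple_rank A B C f N (vs ! k) < triple_rank A B C f N (vs ! j)" using edge by (auto simp: dir_triple_dag)
      then show False using layer_le_if_triple_rank_less[of f "vs ! k" N "vs ! j" A B C] bd V layer_j layer_k by auto
    qed
    then have "layer A B C (vs ! n) = 2"
      using d_connecting_triple_dag_top_layer[OF bd dc \<open>0 < k\<close> _ _ layer_k] k jk
      by (simp add: n_def j_def)
    then show False using end_B disj by (auto simp: layer_def split: if_splits)
  qed
qed

lemma J_graph_triple_dag_between: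
  assumes inj: "inj_on f V" and bd: "\<forall>v\<in>V. f v < N"
    and J: "(X, Y, S) \<in> J_graph V (triple_dag V A B C f N)" and x: "x \<in> X" and y: "y \<in> Y"
  shows "x \<in> A \<and> y \<in> B \<or> x \<in> B \<and> y \<in> A"
proof (rule ccontr)
  let ?G = "triple_dag V A B C f N"
  assume "\<not> ?thesis"
  moreover have "x \<in> V" "y \<in> V" "x \<noteq> y" "x \<notin> S" "y \<notin> S"
    using J x y by (auto simp: J_graph_def triples_def)
  ultimately have "step ?G Fwd x y \<or> step ?G Bwd x y"
    using triple_dag_adjacent[OF inj bd] by auto
  then obtain e where "step ?G e x y" "e = Fwd \<or> e = Bwd" by blast
  then have "d_connecting ?G S [x, y] [e]"
    by (rule d_connecting_edge) fact+
  moreover have "separated ?G X Y S" using J by (simp add: J_graph_def)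
  ultimately show False
    using separated_not_d_connecting[of ?G X Y S "[x, y]"] x y by simp
qed

lemma J_graph_triple_dag_sides:
  assumes inj: "inj_on f V" and bd: "\<forall>v\<in>V. f v < N" and t: "(A, B, C) \<in> triples V"
    and J: "(X, Y, S) \<in> J_graph V (triple_dag V A B C f N)" and "X \<noteq> {}" "Y \<noteq> {}"
  shows "X \<subseteq> A \<and> Y \<subseteq> B \<or> X \<subseteq> B \<and> Y \<subseteq> A"
proof -
  obtain x0 y0 where x0: "x0 \<in> X" and y0: "y0 \<in> Y" using assms by blast
  have AB: "A \<inter> B = {}" using t by (simp add: triples_def)
  note between = J_graph_triple_dag_between[OF inj bd J]
  show ?thesis
  proof (cases "x0 \<in> A")
    case True
    then have "Y \<subseteq> B" using between[OF x0] AB by blast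
    then have "X \<subseteq> A" using between[OF _ y0] y0 AB by blast
    then show ?thesis using \<open>Y \<subseteq> B\<close> by simp
  next
    case False
    then have "Y \<subseteq> A" using between[OF x0] by blast
    then have "X \<subseteq> B" using between[OF _ y0] y0 AB by blast
    then show ?thesis using \<open>Y \<subseteq> A\<close> by simp
  qed
qed

text \<open>A vertex of C outside S would be the top of a fork between X and Y, and a vertex of S in the
  top layer the bottom of a collider; both give d-connecting walks.\<close>
lemma J_graph_triple_dag_conditioning:
  assumes bd: "\<forall>v\<in>V. f v < N" and t: "(A, B, C) \<in> triples V"
    and J: "(X, Y, S) \<in> J_graph V (triple_dag V A B C f N)"
    and x: "x \<in> X" "x \<in> A \<union> B" and y: "y \<in> Y" "y \<in> A \<union> B"
  shows "C \<subseteq> S \<and> S \<subseteq> A \<union> B \<union> C"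
proof -
  let ?G = "triple_dag V A B C f N"
  have disj: "A \<inter> C = {}" "B \<inter> C = {}" and "C \<subseteq> V" using t by (auto simp: triples_def)
  have V: "x \<in> V" "y \<in> V" "S \<subseteq> V" and "x \<notin> S" "y \<notin> S" and sep: "separated ?G X Y S"
    using J x y by (auto simp: J_graph_def triples_def)
  have layers: "layer A B C x = 1" "layer A B C y = 1" using x y disj by (auto simp: layer_def)
  have "c \<in> S" if c: "c \<in> C" for c
  proof (rule ccontr)
    assume "c \<notin> S"
    have "layer A B C c = 0" using c by (simp add: layer_def)
    then have "triple_rank A B C f N c < triple_rank A B C f N x"
      "triple_rank A B C f N c < triple_rank A B C f N y"
      using layers bd c \<open>C \<subseteq> V\<close> by (simp_all add: triple_rank_less_if_layer_less subset_iff)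
    then have "(c, x) \<in> dir ?G" "(c, y) \<in> dir ?G"
      using V c \<open>C \<subseteq> V\<close> disj by (auto simp: dir_triple_dag)
    then have "d_connecting ?G S [x, c, y] [Bwd, Fwd]"
      by (rule d_connecting_fork) (use \<open>x \<notin> S\<close> \<open>y \<notin> S\<close> \<open>c \<notin> S\<close> in \<open>simp_all\<close>)
    then show False using separated_not_d_connecting[OF _ _ sep, of "[x, c, y]"] x y by simp
  qed
  moreover have "d \<in> A \<union> B \<union> C" if d: "d \<in> S" for d
  proof (rule ccontr)
    assume "d \<notin> A \<union> B \<union> C"
    then have "layer A B C d = 2" by (simp add: layer_def)
    then have "triple_rank A B C f N x < triple_rank A B C f N d"
      "triple_rank A B C f N y < triple_rank A B C f N d"
      using layers bd V by (simp_all add: triple_rank_less_if_layer_less)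
    then have "(x, d) \<in> dir ?G" "(y, d) \<in> dir ?G"
      using V d \<open>d \<notin> A \<union> B \<union> C\<close> by (auto simp: dir_triple_dag)
    then have "d_connecting ?G S [x, d, y] [Fwd, Bwd]"
      by (rule d_connecting_collider) (use \<open>x \<notin> S\<close> \<open>y \<notin> S\<close> d in \<open>simp_all\<close>)
    then show False using separated_not_d_connecting[OF _ _ sep, of "[x, d, y]"] x y by simp
  qed
  ultimately show ?thesis by blast
qed

section \<open>Pearl-minimal graphs above the DAGs of the independences\<close>

lemma J_dist_if_empty:
  assumes d: "distribution_on V M P" and t: "(X, Y, S) \<in> triples V" and empty: "X = {} \<or> Y = {}"
  shows "(X, Y, S) \<in> J_dist V M P"
proof -
  have V: "X \<subseteq> V" "Y \<subseteq> V" "S \<subseteq> V" using t by (auto simp: triples_def)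
  have "cond_indep P M X Y S"
    using empty
  proof
    assume "X = {}"
    then show ?thesis using cond_indep_empty_left[OF d V(2,3)] by simp
  next
    assume "Y = {}"
    then show ?thesis using cond_indep_sym[OF cond_indep_empty_left[OF d V(1,3)]] by simp
  qed
  then show ?thesis using t by (simp add: J_dist_def)
qed

lemma J_graph_triple_dag_subset_J_dist:
  assumes d: "distribution_on V M P" and inj: "inj_on f V" and bd: "\<forall>v\<in>V. f v < N"
    and J: "(A, B, C) \<in> J_dist V M P"
  shows "J_graph V (triple_dag V A B C f N) \<subseteq> J_dist V M P"
proof clarify
  fix X Y S assume XYS: "(X, Y, S) \<in> J_graph V (triple_dag V A B C f N)"
  have t: "(A, B, C) \<in> triples V" and indep: "cond_indep P M A B C"
    and V: "A \<subseteq> V" "B \<subseteq> V" "C \<subseteq> V"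
    using J by (auto simp: J_dist_def triples_def)
  have t': "(X, Y, S) \<in> triples V" using XYS by (simp add: J_graph_def)
  show "(X, Y, S) \<in> J_dist V M P"
  proof (cases "X = {} \<or> Y = {}")
    case True
    then show ?thesis using J_dist_if_empty[OF d t'] by simp
  next
    case False
    then obtain x y where x: "x \<in> X" and y: "y \<in> Y" by blast
    have sides: "X \<subseteq> A \<and> Y \<subseteq> B \<or> X \<subseteq> B \<and> Y \<subseteq> A"
      using J_graph_triple_dag_sides[OF inj bd t XYS] False by blast
    then have "x \<in> A \<union> B" "y \<in> A \<union> B" using x y by blast+
    then have S: "C \<subseteq> S" "S \<subseteq> A \<union> B \<union> C"
      using J_graph_triple_dag_conditioning[OF bd t XYS x(1) _ y(1)] by blast+
    from sides have "cond_indep P M X Y S"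
    proof
      assume "X \<subseteq> A \<and> Y \<subseteq> B"
      then show ?thesis using cond_indep_closure[OF d V indep _ _ S] by blast
    next
      assume "X \<subseteq> B \<and> Y \<subseteq> A"
      moreover have "S \<subseteq> B \<union> A \<union> C" using S by blast
      ultimately show ?thesis
        using cond_indep_closure[OF d V(2,1,3) cond_indep_sym[OF indep] _ _ S(1)] by blast
    qed
    then show ?thesis using t' by (simp add: J_dist_def)
  qed
qed

lemma J_graph_triple_dag:
  assumes "\<forall>v\<in>V. f v < N" "(A, B, C) \<in> triples V"
  shows "(A, B, C) \<in> J_graph V (triple_dag V A B C f N)"
  using separated_triple_dag[OF assms] assms(2) by (simp add: J_graph_def)

lemma finite_triples: "finite V \<Longrightarrow> finite (triples V)"
  by (rule finite_subset[of _ "Pow V \<times> Pow V \<times> Pow V"]) (auto simp: triples_def)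

lemma pearl_minimal_above:
  assumes fin: "finite V" and G0: "G0 \<in> GG" and sub: "J_graph V G0 \<subseteq> J_dist V M P"
  shows "\<exists>G\<in>GG. J_graph V G0 \<subseteq> J_graph V G \<and> pearl_minimal V GG M P G"
proof -
  let ?S = "{J_graph V G | G. G \<in> GG \<and> J_graph V G0 \<subseteq> J_graph V G \<and> J_graph V G \<subseteq> J_dist V M P}"
  have "?S \<subseteq> Pow (triples V)" by (auto simp: J_graph_def)
  then have fin_S: "finite ?S" using finite_triples[OF fin] by (meson finite_Pow_iff finite_subset)
  have ne_S: "?S \<noteq> {}" using G0 sub by blast
  obtain m where m: "m \<in> ?S" and maximal: "\<forall>b\<in>?S. m \<le> b \<longrightarrow> m = b"
    using finite_has_maximal[OF fin_S ne_S] by blast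
  from m obtain G where G: "G \<in> GG" "m = J_graph V G" "J_graph V G0 \<subseteq> J_graph V G"
    "J_graph V G \<subseteq> J_dist V M P" by blast
  have "pearl_minimal V GG M P G"
    unfolding pearl_minimal_def
  proof (intro conjI G(1) G(4) notI)
    assume "\<exists>G'\<in>GG. J_graph V G \<subset> J_graph V G' \<and> J_graph V G' \<subseteq> J_dist V M P"
    then obtain G' where "G' \<in> GG" "J_graph V G \<subset> J_graph V G'" "J_graph V G' \<subseteq> J_dist V M P" by blast
    then have "J_graph V G' \<in> ?S" using G(3) by blast
    then show False using maximal G(2) \<open>J_graph V G \<subset> J_graph V G'\<close> by auto
  qed
  then show ?thesis using G by blast
qed

lemma unique_pearl_minimal_if_faithful:
  assumes "G \<in> GG" "faithful V M P G"
  shows "unique_pearl_minimal V GG M P"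
proof -
  have "J_graph V G1 = J_graph V G" if "pearl_minimal V GG M P G1" for G1
    using that assms unfolding pearl_minimal_def faithful_def by blast
  then show ?thesis by (simp add: unique_pearl_minimal_def markov_equivalent_def)
qed

lemma faithful_if_unique_pearl_minimal:
  assumes fin: "finite V" and DAGs: "\<forall>G. DAG V G \<longrightarrow> G \<in> GG" and d: "distribution_on V M P"
    and unique: "unique_pearl_minimal V GG M P"
  shows "\<exists>G\<in>GG. faithful V M P G"
proof -
  obtain f :: "'a \<Rightarrow> nat" and N where f: "f ` V = {i. i < N}" and inj: "inj_on f V"
    using finite_imp_inj_to_nat_seg[OF fin] by blast
  then have bd: "\<forall>v\<in>V. f v < N" by blast
  have minimal_above: "\<exists>G\<in>GG. J_graph V (triple_dag V A B C f N) \<subseteq> J_graph V G \<and> pearl_minimal V GG M P G"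
    if "(A, B, C) \<in> J_dist V M P" for A B C
    using DAGs DAG_triple_dag J_graph_triple_dag_subset_J_dist[OF d inj bd that]
    by (intro pearl_minimal_above[OF fin]) blast+
  have "({}, {}, {}) \<in> J_dist V M P" using J_dist_if_empty[OF d] by (simp add: triples_def)
  then obtain G0 where G0: "G0 \<in> GG" "pearl_minimal V GG M P G0"
    using minimal_above by blast
  have "J_dist V M P \<subseteq> J_graph V G0"
  proof clarify
    fix X Y S assume XYS: "(X, Y, S) \<in> J_dist V M P"
    then obtain G1 where G1: "G1 \<in> GG" "pearl_minimal V GG M P G1"
      and "J_graph V (triple_dag V X Y S f N) \<subseteq> J_graph V G1"
      using minimal_above[OF XYS] by blast
    moreover have "(X, Y, S) \<in> J_graph V (triple_dag V X Y S f N)"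
      using J_graph_triple_dag[OF bd] XYS by (simp add: J_dist_def)
    moreover have "markov_equivalent V G0 G1"
      using unique G0 G1 unfolding unique_pearl_minimal_def by blast
    ultimately show "(X, Y, S) \<in> J_graph V G0" by (auto simp: markov_equivalent_def)
  qed
  then have "faithful V M P G0" using G0(2) by (auto simp: faithful_def pearl_minimal_def)
  then show ?thesis using G0(1) by blast
qed

theorem proposition11:
  fixes V :: "'v set" and GG :: "'v mgraph set"
    and M :: "'v \<Rightarrow> 'b measure" and P :: "('v \<Rightarrow> 'b) measure"
  assumes "finite V"
    and "\<forall>G \<in> GG. anterial V G"
    and "\<forall>G. DAG V G \<longrightarrow> G \<in> GG"
    and "distribution_on V M P"
  shows "unique_pearl_minimal V GG M P \<longleftrightarrow> (\<exists>G \<in> GG. faithful V M P G)"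
  using faithful_if_unique_pearl_minimal[OF assms(1,3,4)] unique_pearl_minimal_if_faithful by blast

end
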